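(* Let $m\ge1$ be an integer and let $\alpha(m,3)$ denote the independence number of ${\rm SR}(m,3)$. Then $\alpha(m,3)=\frac16(m+1)(m+2)$ if $m\equiv\pm1\pmod 6$; $\alpha(m,3)=\frac16 m(m+3)$ if $m\equiv 3\pmod 6$; $\alpha(m,3)=\frac16 m(m+2)$ if $m\equiv 0,4\pmod 6$; $\alpha(m,3)=\frac16(m^2+2m-2)$ if $m\equiv 2\pmod 6$.
   Context: ${\rm SR}(m,n)$ is the graph whose vertices are the vectors in $\{0,1,2,\dots\}^m$ with coordinate sum $n$, two vertices being adjacent when they differ in precisely two coordinate positions. The independence number is the largest size of a set of pairwise nonadjacent vertices. *)

theory Defs
  imports Main
begin

definition SR_vertices :: "nat \<Rightarrow> nat \<Rightarrow> (nat \<Rightarrow> nat) set" where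
  "SR_vertices m n = {x. (\<forall>i\<ge>m. x i = 0) \<and> (\<Sum>i<m. x i) = n}"

definition SR_adj :: "nat \<Rightarrow> (nat \<Rightarrow> nat) \<Rightarrow> (nat \<Rightarrow> nat) \<Rightarrow> bool" where
  "SR_adj m x y \<longleftrightarrow> card {i. i < m \<and> x i \<noteq> y i} = 2"

definition SR_independent :: "nat \<Rightarrow> nat \<Rightarrow> (nat \<Rightarrow> nat) set \<Rightarrow> bool" where
  "SR_independent m n S \<longleftrightarrow> S \<subseteq> SR_vertices m n \<and>
     (\<forall>x\<in>S. \<forall>y\<in>S. \<not> SR_adj m x y)"

definition SR_alpha :: "nat \<Rightarrow> nat \<Rightarrow> nat" where
  "SR_alpha m n = Max (card ` {S. SR_independent m n S})"

end

theory Submission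
  imports Defs
begin

text \<open>
  Upper bound: for each coordinate a, the members x of an independent set S of SR(m,3) with
  x a > 0, lowered by one at a, form an independent set of SR(m,2); the members of such a set have
  pairwise disjoint supports, so there are at most (m+1)/2 of them. Double counting the supports of
  S, using that at most m members have a coordinate \<ge> 2 and at most one has a coordinate 3, gives
  6|S| \<le> m(m+3)+2, and 6|S| \<le> m(m+2)+2 for even m.

  Lower bound: for odd M \<ge> m the vertices with a fixed weight \<Sum>i. i x_i mod M are independent,
  since adjacent vertices differ by d(e_b - e_c) with 0 < |b - c| < M and 0 < |d| \<le> 3, and d is
  a unit mod M (after discarding the vertices 3 e_a when 3 divides M). Averaging over the M classes
  with M = m or M = m + 1, and comparing residues mod 6, pins down the independence number.
\<close>

lemma SR_vertices_outside: "x \<in> SR_vertices m n \<Longrightarrow> m \<le> i \<Longrightarrow> x i = 0"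
  by (simp add: SR_vertices_def)

lemma SR_vertices_sum: "x \<in> SR_vertices m n \<Longrightarrow> (\<Sum>i<m. x i) = n"
  by (simp add: SR_vertices_def)

lemma SR_vertices_le:
  assumes "x \<in> SR_vertices m n"
  shows "x i \<le> n"
proof (cases "i < m")
  case True
  then have "x i \<le> (\<Sum>j<m. x j)" by (intro member_le_sum) auto
  with assms show ?thesis by (simp add: SR_vertices_sum)
qed (simp add: SR_vertices_outside[OF assms])

lemma SR_vertices_concentrated:
  assumes x: "x \<in> SR_vertices m n" and "x b = n" "i \<noteq> b"
  shows "x i = 0"
proof (cases "i < m \<and> b < m")
  case True
  then have "(\<Sum>j\<in>{b,i}. x j) \<le> (\<Sum>j<m. x j)" by (intro sum_mono2) auto
  with assms show ?thesis by (simp add: SR_vertices_sum)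
next
  case False
  then show ?thesis
    using SR_vertices_outside[OF x] SR_vertices_le[OF x, of i] \<open>x b = n\<close> by (metis le_zero_eq not_le)
qed

lemma SR_vertices_concentrated_eq:
  assumes "x \<in> SR_vertices m n" "y \<in> SR_vertices m n" "x b = n" "y b = n"
  shows "x = y"
proof
  fix i show "x i = y i"
    using assms SR_vertices_concentrated[of x m n b i] SR_vertices_concentrated[of y m n b i]
    by (cases "i = b") auto
qed

lemma SR_adj_concentrated:
  assumes x: "x \<in> SR_vertices m n" and y: "y \<in> SR_vertices m n"
    and "x b = n" "y c = n" "x \<noteq> y" "0 < n"
  shows "SR_adj m x y"
proof -
  have "b \<noteq> c" using SR_vertices_concentrated_eq assms by blast
  have "b < m" "c < m" using assms SR_vertices_outside[OF x, of b] SR_vertices_outside[OF y, of c]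
    by (metis not_le less_irrefl)+
  have "{i. i < m \<and> x i \<noteq> y i} = {b, c}"
    using assms \<open>b \<noteq> c\<close> \<open>b < m\<close> \<open>c < m\<close>
      SR_vertices_concentrated[OF x \<open>x b = n\<close>] SR_vertices_concentrated[OF y \<open>y c = n\<close>]
    by (auto; metis less_irrefl)
  with \<open>b \<noteq> c\<close> show ?thesis by (simp add: SR_adj_def)
qed

lemma SR_vertices_1_concentrated:
  assumes x: "x \<in> SR_vertices m 1"
  obtains b where "x b = 1"
proof -
  have "(\<Sum>i<m. x i) \<noteq> 0" using SR_vertices_sum[OF x] by simp
  then obtain b where "x b \<noteq> 0" by (meson sum.neutral)
  with SR_vertices_le[OF x, of b] have "x b = 1" by linarith
  then show ?thesis by (rule that)
qed

lemma SR_adj_vertices_1: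
  "x \<in> SR_vertices m 1 \<Longrightarrow> y \<in> SR_vertices m 1 \<Longrightarrow> x \<noteq> y \<Longrightarrow> SR_adj m x y"
  by (metis SR_adj_concentrated SR_vertices_1_concentrated zero_less_one)

lemma SR_vertices_diff:
  assumes x: "x \<in> SR_vertices m n" and "z \<le> x"
  shows "x - z \<in> SR_vertices m (n - (\<Sum>i<m. z i))"
proof -
  have "(\<Sum>i<m. x i - z i) = (\<Sum>i<m. x i) - (\<Sum>i<m. z i)"
    using \<open>z \<le> x\<close> by (intro sum_subtractf_nat) (auto simp: le_fun_def)
  with x show ?thesis by (simp add: SR_vertices_def fun_diff_def)
qed

lemma SR_adj_diff:
  assumes "z \<le> x" "z \<le> y"
  shows "SR_adj m (x - z) (y - z) \<longleftrightarrow> SR_adj m x y"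
proof -
  have "x i - z i = y i - z i \<longleftrightarrow> x i = y i" for i
    using assms by (auto simp: le_fun_def) (metis diff_add_inverse2 le_add_diff_inverse2)
  then show ?thesis by (simp add: SR_adj_def fun_diff_def)
qed

lemma le_fun_diff_cancel:
  fixes x y z :: "'a \<Rightarrow> nat"
  assumes "z \<le> x" "z \<le> y" "x - z = y - z"
  shows "x = y"
proof
  fix i
  from assms have "x i - z i = y i - z i" "z i \<le> x i" "z i \<le> y i"
    by (auto simp: le_fun_def fun_diff_def dest: fun_cong[of _ _ i])
  then show "x i = y i" by linarith
qed

lemma SR_adj_if_common_lower_bound:
  assumes x: "x \<in> SR_vertices m n" and y: "y \<in> SR_vertices m n" and "x \<noteq> y"
    and "z \<le> x" "z \<le> y" "n = (\<Sum>i<m. z i) + 1"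
  shows "SR_adj m x y"
proof -
  have "x - z \<noteq> y - z" using le_fun_diff_cancel assms by blast
  moreover have "x - z \<in> SR_vertices m 1" "y - z \<in> SR_vertices m 1"
    using SR_vertices_diff[OF x \<open>z \<le> x\<close>] SR_vertices_diff[OF y \<open>z \<le> y\<close>] assms by simp_all
  ultimately have "SR_adj m (x - z) (y - z)" by (simp add: SR_adj_vertices_1)
  with assms show ?thesis by (simp add: SR_adj_diff)
qed

lemma bij_betw_SR_vertices_lists:
  "bij_betw (\<lambda>x. map x [0..<m]) (SR_vertices m n) {l. length l = m \<and> sum_list l = n}"
proof (rule bij_betw_byWitness[where f' = "\<lambda>l i. if i < m then l ! i else 0"])
  show "\<forall>x\<in>SR_vertices m n. (\<lambda>i. if i < m then map x [0..<m] ! i else 0) = x"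
    by (auto simp: SR_vertices_outside)
  show "\<forall>l\<in>{l. length l = m \<and> sum_list l = n}. map (\<lambda>i. if i < m then l ! i else 0) [0..<m] = l"
    by (auto intro: nth_equalityI)
  show "(\<lambda>x. map x [0..<m]) ` SR_vertices m n \<subseteq> {l. length l = m \<and> sum_list l = n}"
    by (auto simp: SR_vertices_def sum_list_sum_nth atLeast0LessThan)
  show "(\<lambda>l i. if i < m then l ! i else 0) ` {l. length l = m \<and> sum_list l = n} \<subseteq> SR_vertices m n"
    by (auto simp: SR_vertices_def sum_list_sum_nth atLeast0LessThan)
qed

lemma finite_SR_vertices: "finite (SR_vertices m n)"
proof -
  have "finite {l::nat list. length l = m \<and> sum_list l = n}"
    by (rule finite_subset[of _ "{l. set l \<subseteq> {..n} \<and> length l = m}"])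
      (auto simp: finite_lists_length_eq member_le_sum_list)
  then show ?thesis using bij_betw_finite[OF bij_betw_SR_vertices_lists] by blast
qed

lemma card_SR_vertices: "card (SR_vertices m n) = (n + m - 1) choose n"
  using bij_betw_same_card[OF bij_betw_SR_vertices_lists] card_length_sum_list by simp

lemma six_times_choose_3: "6 * ((k + 2) choose 3) = k * (k + 1) * (k + 2)"
proof (induction k)
  case (Suc k)
  have "Suc k + 2 choose 3 = (k + 2 choose 2) + (k + 2 choose 3)"
    using choose_reduce_nat[of "Suc k + 2" 3] by simp
  moreover have "2 * (k + 2 choose 2) = (k + 2) * (k + 1)" by (simp add: choose_two)
  ultimately show ?case using Suc by (simp add: algebra_simps)
qed simp

lemma card_SR_vertices_3: "6 * card (SR_vertices m 3) = m * (m + 1) * (m + 2)"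
proof (cases m)
  case (Suc k)
  then have "3 + m - 1 = m + 2" by simp
  then have "card (SR_vertices m 3) = (m + 2) choose 3" by (simp add: card_SR_vertices)
  then show ?thesis using six_times_choose_3[of m] by simp
qed (simp add: card_SR_vertices)

lemma finite_SR_independent: "SR_independent m n S \<Longrightarrow> finite S"
  using finite_SR_vertices finite_subset by (auto simp: SR_independent_def)

lemma SR_independent_subset: "SR_independent m n S \<Longrightarrow> T \<subseteq> S \<Longrightarrow> SR_independent m n T"
  by (auto simp: SR_independent_def)

lemma SR_independent_diff:
  assumes S: "SR_independent m n S" and z: "\<forall>x\<in>S. z \<le> x"
  shows "SR_independent m (n - (\<Sum>i<m. z i)) ((\<lambda>x. x - z) ` S)"
    and "inj_on (\<lambda>x. x - z) S"
proof -
  show "inj_on (\<lambda>x. x - z) S" unfolding inj_on_def using z le_fun_diff_cancel by blast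
  show "SR_independent m (n - (\<Sum>i<m. z i)) ((\<lambda>x. x - z) ` S)"
    unfolding SR_independent_def
  proof (intro conjI ballI)
    show "(\<lambda>x. x - z) ` S \<subseteq> SR_vertices m (n - (\<Sum>i<m. z i))"
      using S z SR_vertices_diff by (auto simp: SR_independent_def)
    fix x' y' assume "x' \<in> (\<lambda>x. x - z) ` S" "y' \<in> (\<lambda>x. x - z) ` S"
    then obtain x y where "x \<in> S" "y \<in> S" "x' = x - z" "y' = y - z" by blast
    then show "\<not> SR_adj m x' y'" using S z SR_adj_diff[of z x y m] by (simp add: SR_independent_def)
  qed
qed

lemma card_SR_independent_concentrated:
  assumes S: "SR_independent m n S" and "0 < n"
  shows "card {x\<in>S. \<exists>a. x a = n} \<le> 1"
proof -
  have "x = y" if "x \<in> S" "y \<in> S" "x a = n" "y b = n" for x y a b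
    using that S SR_adj_concentrated[of x m n y a b] \<open>0 < n\<close> by (auto simp: SR_independent_def)
  then show ?thesis by (auto simp: card_le_Suc0_iff_eq finite_SR_independent[OF S])
qed

lemma card_SR_independent_1:
  assumes S: "SR_independent m 1 S"
  shows "card S \<le> 1"
proof -
  have "x = y" if "x \<in> S" "y \<in> S" for x y
    using that S SR_adj_vertices_1[of x m y] by (auto simp: SR_independent_def)
  then show ?thesis by (auto simp: card_le_Suc0_iff_eq finite_SR_independent[OF S])
qed

lemma card_SR_independent_coordinate_ge:
  assumes S: "SR_independent m n S" and "2 \<le> n"
  shows "card {x\<in>S. \<exists>a. n - 1 \<le> x a} \<le> m"
proof -
  let ?S = "\<lambda>a. {x\<in>S. n - 1 \<le> x a}"
  have le1: "card (?S a) \<le> 1" if "a < m" for a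
  proof -
    let ?z = "(\<lambda>_. 0)(a := n - 1)"
    have Sa: "SR_independent m n (?S a)" by (rule SR_independent_subset[OF S]) auto
    have z: "\<forall>x\<in>?S a. ?z \<le> x" by (auto simp: le_fun_def)
    have "n - (\<Sum>i<m. ?z i) = 1" using \<open>a < m\<close> \<open>2 \<le> n\<close> by simp
    then have "card ((\<lambda>x. x - ?z) ` ?S a) \<le> 1"
      using SR_independent_diff(1)[OF Sa z] card_SR_independent_1 by simp
    then show ?thesis using card_image[OF SR_independent_diff(2)[OF Sa z]] by simp
  qed
  have "{x\<in>S. \<exists>a. n - 1 \<le> x a} \<subseteq> (\<Union>a<m. ?S a)"
  proof safe
    fix x a assume "x \<in> S" "n - 1 \<le> x a"
    have x: "x \<in> SR_vertices m n" using S \<open>x \<in> S\<close> by (auto simp: SR_independent_def)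
    have "x a \<noteq> 0" using \<open>2 \<le> n\<close> \<open>n - 1 \<le> x a\<close> by linarith
    then have "a < m" using SR_vertices_outside[OF x, of a] by linarith
    with \<open>x \<in> S\<close> \<open>n - 1 \<le> x a\<close> show "x \<in> (\<Union>a<m. ?S a)" by blast
  qed
  then have "card {x\<in>S. \<exists>a. n - 1 \<le> x a} \<le> card (\<Union>a<m. ?S a)"
    by (intro card_mono) (use finite_SR_independent[OF S] in auto)
  also have "\<dots> \<le> (\<Sum>a<m. card (?S a))" by (rule card_UN_le) simp
  also have "\<dots> \<le> (\<Sum>a<m. 1)" using le1 by (intro sum_mono) simp
  finally show ?thesis by simp
qed

definition SR_support :: "nat \<Rightarrow> (nat \<Rightarrow> nat) \<Rightarrow> nat set" where
  "SR_support m x = {i. i < m \<and> x i \<noteq> 0}"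

lemma finite_SR_support [simp]: "finite (SR_support m x)"
  by (simp add: SR_support_def)

lemma card_SR_support_ge:
  assumes x: "x \<in> SR_vertices m n" and "\<forall>i. x i \<le> k"
  shows "n \<le> k * card (SR_support m x)"
proof -
  have "sum x (SR_support m x) = (\<Sum>i<m. x i)"
    by (rule sum.mono_neutral_left) (auto simp: SR_support_def)
  then have "n = sum x (SR_support m x)" using SR_vertices_sum[OF x] by simp
  also have "\<dots> \<le> card (SR_support m x) * k" using sum_bounded_above[of "SR_support m x" x k] assms by simp
  finally show ?thesis by (simp add: mult.commute)
qed

lemma card_SR_independent_2:
  assumes S: "SR_independent m 2 S"
  shows "2 * card S \<le> m + 1"
proof -
  have fin: "finite S" using finite_SR_independent[OF S] .
  have V: "x \<in> SR_vertices m 2" if "x \<in> S" for x using S that by (auto simp: SR_independent_def)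
  have disjoint: "SR_support m x \<inter> SR_support m y = {}" if "x \<in> S" "y \<in> S" "x \<noteq> y" for x y
  proof (rule ccontr)
    assume "SR_support m x \<inter> SR_support m y \<noteq> {}"
    then obtain b where "b < m" "x b \<noteq> 0" "y b \<noteq> 0" by (auto simp: SR_support_def)
    then have "SR_adj m x y"
      by (intro SR_adj_if_common_lower_bound[OF V[OF that(1)] V[OF that(2)] that(3),
            where z = "(\<lambda>_. 0)(b := 1)"]) (auto simp: le_fun_def)
    with S that show False by (auto simp: SR_independent_def)
  qed
  let ?E = "{x\<in>S. \<exists>a. x a = 2}"
  have "2 \<le> card (SR_support m x) + of_bool (x \<in> ?E)" if "x \<in> S" for x
  proof (cases "x \<in> ?E")
    case True
    have "2 \<le> 2 * card (SR_support m x)"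
      using card_SR_support_ge[OF V[OF that]] SR_vertices_le[OF V[OF that]] by blast
    with True show ?thesis by simp
  next
    case False
    have "x i \<le> 1" for i
    proof -
      have "x i \<noteq> 2" using False that by auto
      with SR_vertices_le[OF V[OF that], of i] show ?thesis by linarith
    qed
    then show ?thesis using card_SR_support_ge[OF V[OF that], of 1] by simp
  qed
  then have "(\<Sum>x\<in>S. 2) \<le> (\<Sum>x\<in>S. card (SR_support m x) + of_bool (x \<in> ?E))"
    by (rule sum_mono)
  also have "\<dots> = (\<Sum>x\<in>S. card (SR_support m x)) + card ?E"
    using fin by (simp add: sum.distrib sum.If_cases Int_def)
  finally have "2 * card S \<le> (\<Sum>x\<in>S. card (SR_support m x)) + card ?E"
    by (simp add: mult.commute)
  moreover have "(\<Sum>x\<in>S. card (SR_support m x)) = card (\<Union>x\<in>S. SR_support m x)"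
    using fin disjoint by (intro card_UN_disjoint[symmetric]) auto
  moreover have "(\<Union>x\<in>S. SR_support m x) \<subseteq> {..<m}" by (auto simp: SR_support_def)
  then have "card (\<Union>x\<in>S. SR_support m x) \<le> m" by (metis card_lessThan card_mono finite_lessThan)
  ultimately show ?thesis using card_SR_independent_concentrated[OF S] by simp
qed

lemma card_SR_independent_3_coordinate_pos:
  assumes S: "SR_independent m 3 S" and "a < m"
  shows "2 * card {x\<in>S. x a \<noteq> 0} \<le> m + 1"
proof -
  let ?Sa = "{x\<in>S. x a \<noteq> 0}" and ?z = "(\<lambda>_. 0::nat)(a := 1)"
  have Sa: "SR_independent m 3 ?Sa" by (rule SR_independent_subset[OF S]) auto
  have z: "\<forall>x\<in>?Sa. ?z \<le> x" by (auto simp: le_fun_def)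
  have "3 - (\<Sum>i<m. ?z i) = 2" using \<open>a < m\<close> by simp
  then have "2 * card ((\<lambda>x. x - ?z) ` ?Sa) \<le> m + 1"
    using SR_independent_diff(1)[OF Sa z] card_SR_independent_2 by simp
  then show ?thesis using card_image[OF SR_independent_diff(2)[OF Sa z]] by simp
qed

lemma sum_card_SR_support:
  assumes "finite S"
  shows "(\<Sum>x\<in>S. card (SR_support m x)) = (\<Sum>a<m. card {x\<in>S. x a \<noteq> 0})"
proof -
  have "(\<Sum>x\<in>S. card (SR_support m x)) = (\<Sum>x\<in>S. \<Sum>a<m. of_bool (x a \<noteq> 0))"
    by (rule sum.cong) (auto simp: sum.If_cases Int_def SR_support_def)
  also have "\<dots> = (\<Sum>a<m. \<Sum>x\<in>S. of_bool (x a \<noteq> 0))" by (rule sum.swap)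
  also have "\<dots> = (\<Sum>a<m. card {x\<in>S. x a \<noteq> 0})"
    using assms by (simp add: sum.If_cases Int_def)
  finally show ?thesis .
qed

lemma card_SR_support_3:
  assumes x: "x \<in> SR_vertices m 3"
  shows "3 \<le> card (SR_support m x) + of_bool (\<exists>a. 2 \<le> x a) + of_bool (\<exists>a. x a = 3)"
proof (cases "\<exists>a. x a = 3")
  case True
  then obtain a where "x a = 3" by blast
  then have "\<exists>a. 2 \<le> x a" by (intro exI[of _ a]) simp
  moreover have "3 \<le> 3 * card (SR_support m x)"
    using card_SR_support_ge[OF x] SR_vertices_le[OF x] by blast
  ultimately show ?thesis using True by simp
next
  case no3: False
  have le2: "x i \<le> 2" for i
    using no3 SR_vertices_le[OF x, of i] by (metis le_antisym not_less_eq_eq numeral_2_eq_2 numeral_3_eq_3)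
  show ?thesis
  proof (cases "\<exists>a. 2 \<le> x a")
    case True
    have "3 \<le> 2 * card (SR_support m x)" using card_SR_support_ge[OF x] le2 by blast
    with True no3 show ?thesis by simp
  next
    case False
    then have "x i \<le> 1" for i by (metis not_le one_add_one less_Suc_eq_le plus_1_eq_Suc)
    then have "3 \<le> 1 * card (SR_support m x)" using card_SR_support_ge[OF x] by blast
    with False no3 show ?thesis by simp
  qed
qed

lemma card_SR_independent_3:
  assumes S: "SR_independent m 3 S"
  shows "6 * card S \<le> m * (m + 3) + 2"
    and "even m \<Longrightarrow> 6 * card S \<le> m * (m + 2) + 2"
proof -
  have fin: "finite S" using finite_SR_independent[OF S] .
  let ?supp = "\<Sum>x\<in>S. card (SR_support m x)"
  have "(\<Sum>x\<in>S. 3::nat) \<le>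
      (\<Sum>x\<in>S. card (SR_support m x) + of_bool (\<exists>a. 2 \<le> x a) + of_bool (\<exists>a. x a = 3))"
  proof (rule sum_mono)
    fix x assume "x \<in> S"
    with S have "x \<in> SR_vertices m 3" by (auto simp: SR_independent_def)
    then show "3 \<le> card (SR_support m x) + of_bool (\<exists>a. 2 \<le> x a) + of_bool (\<exists>a. x a = 3)"
      by (rule card_SR_support_3)
  qed
  also have "\<dots> = ?supp + card {x\<in>S. \<exists>a. 3 - 1 \<le> x a} + card {x\<in>S. \<exists>a. x a = 3}"
    using fin by (simp add: sum.distrib sum.If_cases Int_def)
  finally have "3 * card S \<le> ?supp + m + 1"
    using card_SR_independent_coordinate_ge[OF S] card_SR_independent_concentrated[OF S] by simp
  moreover have "2 * ?supp \<le> m * (m + 1)" and "even m \<Longrightarrow> 2 * ?supp \<le> m * m"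
  proof -
    have local: "2 * card {x\<in>S. x a \<noteq> 0} \<le> m + 1" if "a < m" for a
      using card_SR_independent_3_coordinate_pos[OF S that] .
    have supp: "2 * ?supp = (\<Sum>a<m. 2 * card {x\<in>S. x a \<noteq> 0})"
      by (simp add: sum_card_SR_support[OF fin] sum_distrib_left)
    show "2 * ?supp \<le> m * (m + 1)"
      unfolding supp using sum_mono[of "{..<m}", OF local] by simp
    show "2 * ?supp \<le> m * m" if "even m"
    proof -
      have "2 * card {x\<in>S. x a \<noteq> 0} \<le> m" if "a < m" for a
        using local[OF that] \<open>even m\<close> by presburger
      then show ?thesis unfolding supp using sum_mono[of "{..<m}" _ "\<lambda>_. m"] by simp
    qed
  qed
  ultimately show "6 * card S \<le> m * (m + 3) + 2" and "even m \<Longrightarrow> 6 * card S \<le> m * (m + 2) + 2"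
    by (simp_all add: algebra_simps)
qed

definition SR_weight :: "nat \<Rightarrow> (nat \<Rightarrow> nat) \<Rightarrow> nat" where
  "SR_weight m x = (\<Sum>i<m. i * x i)"

lemma SR_adj_weight_cong:
  assumes "SR_adj m x y" and x: "x \<in> SR_vertices m n" and y: "y \<in> SR_vertices m n"
    and "SR_weight m x mod M = SR_weight m y mod M" and "m \<le> M"
  obtains b where "b < m" "x b \<noteq> y b" "\<not> coprime (int M) (int (x b) - int (y b))"
proof -
  obtain b c where D: "{i. i < m \<and> x i \<noteq> y i} = {b, c}" and "b \<noteq> c"
    using \<open>SR_adj m x y\<close> unfolding SR_adj_def card_2_iff by blast
  then have "b < m" "c < m" "x b \<noteq> y b" by blast+
  define d where "d i = int (x i) - int (y i)" for i
  have d0: "\<And>i. i \<in> {..<m} - {b, c} \<Longrightarrow> d i = 0" using D by (auto simp: d_def)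
  have "(\<Sum>i<m. d i) = (\<Sum>i\<in>{b,c}. d i)"
    using \<open>b < m\<close> \<open>c < m\<close> d0 by (intro sum.mono_neutral_right) auto
  moreover have "(\<Sum>i<m. d i) = 0"
    using SR_vertices_sum[OF x] SR_vertices_sum[OF y] by (simp add: d_def sum_subtractf flip: of_nat_sum)
  ultimately have dc: "d c = - d b" using \<open>b \<noteq> c\<close> by simp
  have "int (SR_weight m x) - int (SR_weight m y) = (\<Sum>i<m. int i * d i)"
    by (simp add: d_def SR_weight_def sum_subtractf right_diff_distrib flip: of_nat_sum of_nat_mult)
  also have "\<dots> = (\<Sum>i\<in>{b,c}. int i * d i)"
    using \<open>b < m\<close> \<open>c < m\<close> d0 by (intro sum.mono_neutral_right) auto
  also have "\<dots> = (int b - int c) * d b" using \<open>b \<noteq> c\<close> dc by (simp add: algebra_simps)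
  finally have "int (SR_weight m x) - int (SR_weight m y) = (int b - int c) * d b" .
  moreover have "int M dvd int (SR_weight m x) - int (SR_weight m y)"
    using \<open>SR_weight m x mod M = SR_weight m y mod M\<close> by (metis mod_eq_dvd_iff of_nat_mod)
  ultimately have "int M dvd (int b - int c) * d b" by simp
  moreover have "\<not> int M dvd int b - int c"
  proof
    assume "int M dvd int b - int c"
    then have "int M \<le> \<bar>int b - int c\<bar>" using \<open>b \<noteq> c\<close> by (intro zdvd_imp_le) auto
    with \<open>b < m\<close> \<open>c < m\<close> \<open>m \<le> M\<close> show False by linarith
  qed
  ultimately have "\<not> coprime (int M) (d b)"
    using coprime_dvd_mult_left_iff by blast
  with \<open>b < m\<close> \<open>x b \<noteq> y b\<close> show ?thesis by (intro that) (simp_all add: d_def)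
qed

lemma coprime_int_small:
  fixes d :: int
  assumes "odd M" "d \<noteq> 0" "\<bar>d\<bar> \<le> 3" "\<bar>d\<bar> = 3 \<Longrightarrow> \<not> 3 dvd M"
  shows "coprime (int M) d"
proof -
  consider "\<bar>d\<bar> = 1" | "\<bar>d\<bar> = 2" | "\<bar>d\<bar> = 3" using assms(2,3) by linarith
  then have "coprime (int M) \<bar>d\<bar>"
  proof cases
    case 3
    then have "int M mod 3 = 1 \<or> int M mod 3 = 2" using assms(4) by presburger
    then have "coprime (int M mod 3) 3" by (auto simp del: coprime_mod_left_iff)
    with 3 show ?thesis using coprime_mod_left_iff[of 3 "int M"] by simp
  qed (use assms(1) in simp_all)
  then show ?thesis by simp
qed

lemma SR_independent_weight_class:
  assumes T: "T \<subseteq> SR_vertices m 3" and "odd M" "m \<le> M"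
    and no3: "3 dvd M \<Longrightarrow> \<forall>x\<in>T. \<forall>i. x i \<noteq> 3"
  shows "SR_independent m 3 {x\<in>T. SR_weight m x mod M = c}"
  unfolding SR_independent_def
proof (intro conjI ballI)
  show "{x\<in>T. SR_weight m x mod M = c} \<subseteq> SR_vertices m 3" using T by auto
  fix x y assume x: "x \<in> {x\<in>T. SR_weight m x mod M = c}" and y: "y \<in> {x\<in>T. SR_weight m x mod M = c}"
  show "\<not> SR_adj m x y"
  proof
    assume "SR_adj m x y"
    moreover have "SR_weight m x mod M = SR_weight m y mod M" using x y by simp
    ultimately obtain b where "x b \<noteq> y b" "\<not> coprime (int M) (int (x b) - int (y b))"
      using SR_adj_weight_cong x y T \<open>m \<le> M\<close> by blast
    moreover have "x b \<le> 3" "y b \<le> 3" using x y T SR_vertices_le by blast+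
    moreover have "\<not> 3 dvd M" if "\<bar>int (x b) - int (y b)\<bar> = 3"
    proof
      assume "3 dvd M"
      then have "x b \<noteq> 3" "y b \<noteq> 3" using no3 x y by auto
      with that \<open>x b \<le> 3\<close> \<open>y b \<le> 3\<close> show False by linarith
    qed
    ultimately show False using coprime_int_small[OF \<open>odd M\<close>] by simp
  qed
qed

lemma card_le_mult_card_fiber:
  assumes "finite T" "f ` T \<subseteq> {..<M::nat}"
  obtains c where "card T \<le> M * card {x\<in>T. f x = c}"
proof (rule ccontr)
  assume "\<not> thesis"
  let ?F = "\<lambda>c. {x\<in>T. f x = c}"
  have less: "M * card (?F c) < card T" for c
    using that \<open>\<not> thesis\<close> by (meson not_le)
  have "T \<subseteq> (\<Union>c<M. ?F c)" using assms(2) by blast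
  then have "card T \<le> card (\<Union>c<M. ?F c)" using assms(1) by (intro card_mono) auto
  also have "\<dots> \<le> (\<Sum>c<M. card (?F c))" by (rule card_UN_le) simp
  finally have "M * card T \<le> (\<Sum>c<M. M * card (?F c))"
    by (simp add: sum_distrib_left[symmetric])
  moreover have "T \<noteq> {}" using less[of 0] by auto
  then have "M \<noteq> 0" using assms(2) by auto
  then have "(\<Sum>c<M. M * card (?F c)) < (\<Sum>c<M. card T)" using less by (intro sum_strict_mono) auto
  ultimately show False by simp
qed

lemma finite_card_SR_independent: "finite (card ` {S. SR_independent m n S})"
proof (rule finite_subset)
  show "card ` {S. SR_independent m n S} \<subseteq> {..card (SR_vertices m n)}"
    using finite_SR_vertices by (auto simp: SR_independent_def card_mono)
qed simp

lemma card_le_SR_alpha: "SR_independent m n S \<Longrightarrow> card S \<le> SR_alpha m n"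
  unfolding SR_alpha_def using finite_card_SR_independent by (intro Max_ge) auto

lemma SR_alpha_attained:
  obtains S where "SR_independent m n S" "card S = SR_alpha m n"
proof -
  have "SR_independent m n {}" by (simp add: SR_independent_def)
  then have "SR_alpha m n \<in> card ` {S. SR_independent m n S}"
    unfolding SR_alpha_def using finite_card_SR_independent by (intro Max_in) auto
  then show ?thesis using that by auto
qed

lemma card_SR_vertices_3_le_SR_alpha:
  assumes "odd M" "m \<le> M"
  shows "card (SR_vertices m 3) \<le> M * SR_alpha m 3 + m"
    and "\<not> 3 dvd M \<Longrightarrow> card (SR_vertices m 3) \<le> M * SR_alpha m 3"
proof -
  have fiber: "card T \<le> M * SR_alpha m 3"
    if T: "T \<subseteq> SR_vertices m 3" and no3: "3 dvd M \<Longrightarrow> \<forall>x\<in>T. \<forall>i. x i \<noteq> 3" for T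
  proof -
    have "finite T" using T finite_SR_vertices finite_subset by blast
    moreover have "(\<lambda>x. SR_weight m x mod M) ` T \<subseteq> {..<M}" using odd_pos[OF \<open>odd M\<close>] by auto
    ultimately obtain c where "card T \<le> M * card {x\<in>T. SR_weight m x mod M = c}"
      by (rule card_le_mult_card_fiber)
    also have "\<dots> \<le> M * SR_alpha m 3"
      using SR_independent_weight_class[OF T assms no3] card_le_SR_alpha by simp
    finally show ?thesis .
  qed
  then show "\<not> 3 dvd M \<Longrightarrow> card (SR_vertices m 3) \<le> M * SR_alpha m 3" by simp
  let ?T = "{x\<in>SR_vertices m 3. \<forall>i. x i \<noteq> 3}"
    and ?e = "\<lambda>a. (\<lambda>_. 0::nat)(a := 3)"
  have "SR_vertices m 3 \<subseteq> ?T \<union> ?e ` {..<m}"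
  proof
    fix x assume x: "x \<in> SR_vertices m 3"
    show "x \<in> ?T \<union> ?e ` {..<m}"
    proof (cases "\<exists>a. x a = 3")
      case True
      then obtain a where "x a = 3" by blast
      then have "a < m" "x = ?e a"
        using SR_vertices_outside[OF x, of a] SR_vertices_concentrated[OF x] by (force, auto)
      then show ?thesis by blast
    qed (use x in auto)
  qed
  then have "card (SR_vertices m 3) \<le> card (?T \<union> ?e ` {..<m})"
    by (intro card_mono) (simp_all add: finite_SR_vertices)
  also have "\<dots> \<le> card ?T + card (?e ` {..<m})" by (rule card_Un_le)
  also have "\<dots> \<le> card ?T + m" using card_image_le[of "{..<m}" ?e] by simp
  finally show "card (SR_vertices m 3) \<le> M * SR_alpha m 3 + m" using fiber[of ?T] by simp
qed

lemma SR_alpha_3_bounds: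
  assumes "1 \<le> m"
  shows "6 * SR_alpha m 3 \<le> m * (m + 3) + 2"
    and "even m \<Longrightarrow> 6 * SR_alpha m 3 \<le> m * (m + 2) + 2"
    and "odd m \<Longrightarrow> m * (m + 3) \<le> 6 * SR_alpha m 3 + 4"
    and "odd m \<Longrightarrow> \<not> 3 dvd m \<Longrightarrow> m * (m + 3) + 2 \<le> 6 * SR_alpha m 3"
    and "even m \<Longrightarrow> m * (m + 2) < 6 * SR_alpha m 3 + 6"
    and "even m \<Longrightarrow> \<not> 3 dvd (m + 1) \<Longrightarrow> m * (m + 2) \<le> 6 * SR_alpha m 3"
proof -
  obtain S where S: "SR_independent m 3 S" "card S = SR_alpha m 3" by (rule SR_alpha_attained)
  then show "6 * SR_alpha m 3 \<le> m * (m + 3) + 2" "even m \<Longrightarrow> 6 * SR_alpha m 3 \<le> m * (m + 2) + 2"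
    using card_SR_independent_3[OF S(1)] by simp_all
  let ?a = "SR_alpha m 3"
  have V: "m * ((m + 1) * (m + 2)) = 6 * card (SR_vertices m 3)"
    "(m + 1) * (m * (m + 2)) = 6 * card (SR_vertices m 3)"
    using card_SR_vertices_3[of m] by (simp_all only: ac_simps)
  have sq: "(m + 1) * (m + 2) = m * (m + 3) + 2" by (simp add: algebra_simps)
  show "m * (m + 3) \<le> 6 * ?a + 4" if "odd m"
  proof -
    have "m * ((m + 1) * (m + 2)) \<le> 6 * (m * ?a + m)"
      unfolding V using card_SR_vertices_3_le_SR_alpha(1)[OF that order_refl] by (rule mult_le_mono2)
    also have "\<dots> = m * (6 * ?a + 6)" by (simp add: algebra_simps)
    finally have "(m + 1) * (m + 2) \<le> 6 * ?a + 6" by (rule mult_left_le_imp_le) (use \<open>1 \<le> m\<close> in simp)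
    with sq show ?thesis by linarith
  qed
  show "m * (m + 3) + 2 \<le> 6 * ?a" if "odd m" "\<not> 3 dvd m"
  proof -
    have "m * ((m + 1) * (m + 2)) \<le> 6 * (m * ?a)"
      unfolding V using card_SR_vertices_3_le_SR_alpha(2)[OF that(1) order_refl that(2)] by (rule mult_le_mono2)
    also have "\<dots> = m * (6 * ?a)" by (simp add: algebra_simps)
    finally have "(m + 1) * (m + 2) \<le> 6 * ?a" by (rule mult_left_le_imp_le) (use \<open>1 \<le> m\<close> in simp)
    with sq show ?thesis by linarith
  qed
  show "m * (m + 2) < 6 * ?a + 6" if "even m"
  proof -
    have "(m + 1) * (m * (m + 2)) \<le> 6 * ((m + 1) * ?a + m)"
      unfolding V using card_SR_vertices_3_le_SR_alpha(1)[of "m + 1" m] that by (intro mult_le_mono2) simp_all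
    also have "\<dots> < (m + 1) * (6 * ?a + 6)" by (simp add: algebra_simps)
    finally show ?thesis by (rule mult_left_less_imp_less) simp
  qed
  show "m * (m + 2) \<le> 6 * ?a" if "even m" "\<not> 3 dvd (m + 1)"
  proof -
    have "(m + 1) * (m * (m + 2)) \<le> 6 * ((m + 1) * ?a)"
      unfolding V using card_SR_vertices_3_le_SR_alpha(2)[of "m + 1" m] that by (intro mult_le_mono2) simp_all
    also have "\<dots> = (m + 1) * (6 * ?a)" by (simp add: algebra_simps)
    finally show ?thesis by (rule mult_left_le_imp_le) simp
  qed
qed

lemma mult_add_mod_eq: "m * (m + k) mod d = m mod d * ((m mod d + k) mod d) mod (d::nat)"
  by (metis mod_add_left_eq mod_mult_eq)

theorem proposition13:
  fixes m :: nat
  assumes "m \<ge> 1"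
  shows "(m mod 6 = 1 \<or> m mod 6 = 5 \<longrightarrow> 6 * SR_alpha m 3 = (m + 1) * (m + 2))
       \<and> (m mod 6 = 3 \<longrightarrow> 6 * SR_alpha m 3 = m * (m + 3))
       \<and> (m mod 6 = 0 \<or> m mod 6 = 4 \<longrightarrow> 6 * SR_alpha m 3 = m * (m + 2))
       \<and> (m mod 6 = 2 \<longrightarrow> 6 * SR_alpha m 3 = m\<^sup>2 + 2 * m - 2)"
proof -
  define a P Q where "a = SR_alpha m 3" and "P = m * (m + 3)" and "Q = m * (m + 2)"
  note bounds = SR_alpha_3_bounds[OF assms, folded a_def P_def Q_def]
  have P_mod: "P mod 6 = m mod 6 * ((m mod 6 + 3) mod 6) mod 6"
    and Q_mod: "Q mod 6 = m mod 6 * ((m mod 6 + 2) mod 6) mod 6"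
    unfolding P_def Q_def by (rule mult_add_mod_eq)+
  have "(m + 1) * (m + 2) = P + 2" "m\<^sup>2 + 2 * m = Q"
    unfolding P_def Q_def by (simp_all add: algebra_simps power2_eq_square)
  show ?thesis
    unfolding a_def[symmetric] P_def[symmetric] Q_def[symmetric]
  proof (intro conjI impI)
    assume "m mod 6 = 1 \<or> m mod 6 = 5"
    then have "odd m" "\<not> 3 dvd m" by presburger+
    with bounds(1,4) \<open>(m + 1) * (m + 2) = P + 2\<close> show "6 * a = (m + 1) * (m + 2)" by simp
  next
    assume residue: "m mod 6 = 3"
    then have "odd m" by presburger
    moreover have "P mod 6 = 0" using residue P_mod by simp
    ultimately show "6 * a = P" using bounds(1) bounds(3)[OF \<open>odd m\<close>] by presburger
  next
    assume residue: "m mod 6 = 0 \<or> m mod 6 = 4"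
    then have "even m" "\<not> 3 dvd (m + 1)" by presburger+
    moreover have "Q mod 6 = 0" using residue Q_mod by auto
    ultimately show "6 * a = Q" using bounds(2,6)[OF \<open>even m\<close>] by presburger
  next
    assume residue: "m mod 6 = 2"
    then have "even m" by presburger
    moreover have "Q mod 6 = 2" using residue Q_mod by simp
    ultimately show "6 * a = m\<^sup>2 + 2 * m - 2"
      using bounds(2,5)[OF \<open>even m\<close>] \<open>m\<^sup>2 + 2 * m = Q\<close> by presburger
  qed
qed

end
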